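(* Let $X^{(\kappa)}_N$ be a twisted affine type with associated simply laced diagram $X_N$ and diagram automorphism $\sigma$. Let $\mathcal{J}^\sigma$ be the ideal of $\mathcal{T}(X_N)$ (with spectral parameter domain $\mathbb{C}_\hbar$) generated by $\hat T^{(a)}_m(u)-\hat T^{(\sigma(a))}_m(u+\Omega)$ for all $a\in I$, $m\in\mathbb{N}$, $u\in\mathbb{C}_\hbar$. Then there is a ring isomorphism $\mathcal{T}(X_N)/\mathcal{J}^\sigma\to\mathcal{T}(X^{(\kappa)}_N)$ sending the class of $\hat T^{(a)}_m(u)$ to $T^{(a)}_m(u)$ for $a\in I_\sigma$, $m\in\mathbb{N}$, $u\in\mathbb{C}_{\kappa_a\hbar}$ (the class of $\hat T^{(a)}_m(u)$ for $a\in I_\sigma$ depends only on $u$ modulo $(2\pi\sqrt{-1}/\kappa_a\hbar)\mathbb{Z}$).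
   Context: Fix $\hbar\in\mathbb{C}\setminus2\pi\sqrt{-1}\mathbb{Q}$; $\mathbb{C}_c:=\mathbb{C}/(2\pi\sqrt{-1}/c)\mathbb{Z}$. The pairs: $A^{(2)}_{2r-1}$ ($r\ge2$): $X_N=A_{2r-1}$ (chain), $\sigma(a)=2r-a$, $\kappa=2$; $A^{(2)}_{2r}$ ($r\ge1$): $X_N=A_{2r}$, $\sigma(a)=2r+1-a$, $\kappa=2$; $D^{(2)}_{r+1}$ ($r\ge3$): $X_N=D_{r+1}$ (chain $1-\cdots-(r-1)$ with $r,r+1$ joined to $r-1$), $\sigma$ swaps $r,r+1$, $\kappa=2$; $E^{(2)}_6$: $X_N=E_6$ (chain $1-2-3-5-6$, $4$ joined to $3$), $\sigma$ swaps $1\leftrightarrow6$, $2\leftrightarrow5$, $\kappa=2$; $D^{(3)}_4$: $X_N=D_4$ ($1,3,4$ joined to $2$), $\sigma:1\mapsto3\mapsto4\mapsto1$, $\kappa=3$. $I_\sigma=\{1,\dots,r\}$ in the first three cases, $\{1,2,3,4\}$ for $E^{(2)}_6$, $\{1,2\}$ for $D^{(3)}_4$. $\kappa_a=\kappa$ if $\sigma(a)=a$, else $1$. $\Omega=2\pi\sqrt{-1}/(\kappa\hbar)$. $\mathcal{T}(X_N)$: commutative ring with generators $\hat T^{(a)}_m(u)^{\pm1}$ ($a\in I$, $m\in\mathbb{N}$, $u\in\mathbb{C}_\hbar$) and relations $\hat T^{(a)}_m(u-1)\hat T^{(a)}_m(u+1)=\hat T^{(a)}_{m-1}(u)\hat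 T^{(a)}_{m+1}(u)+\prod_{b:C_{ab}=-1}\hat T^{(b)}_m(u)$, $\hat T^{(a)}_0=1$, $C$ the Cartan matrix of $X_N$. $\mathcal{T}(X^{(\kappa)}_N)$: commutative ring with generators $T^{(a)}_m(u)^{\pm1}$ ($a\in I_\sigma$, $m\in\mathbb{N}$, $u\in\mathbb{C}_{\kappa_a\hbar}$) and relations $T^{(a)}_m(u-1)T^{(a)}_m(u+1)=T^{(a)}_{m-1}(u)T^{(a)}_{m+1}(u)+M^{(a)}_m(u)$, with $T^{(0)}_m=T^{(a)}_0=1$, where: $A^{(2)}_{2r-1}$: $M^{(a)}_m=T^{(a-1)}_m(u)T^{(a+1)}_m(u)$ ($a\le r-1$), $M^{(r)}_m=T^{(r-1)}_m(u)T^{(r-1)}_m(u+\Omega)$; $A^{(2)}_{2r}$: $M^{(a)}_m=T^{(a-1)}_m(u)T^{(a+1)}_m(u)$ ($a\le r-1$), $M^{(r)}_m=T^{(r-1)}_m(u)T^{(r)}_m(u+\Omega)$; $D^{(2)}_{r+1}$: $M^{(a)}_m=T^{(a-1)}_m(u)T^{(a+1)}_m(u)$ ($a\le r-2$), $M^{(r-1)}_m=T^{(r-2)}_m(u)T^{(r)}_m(u)T^{(r)}_m(u+\Omega)$, $M^{(r)}_m=T^{(r-1)}_m(u)$; $E^{(2)}_6$: $M^{(1)}_m=T^{(2)}_m(u)$, $M^{(2)}_m=T^{(1)}_m(u)T^{(3)}_m(u)$, $M^{(3)}_m=T^{(2)}_m(u)T^{(2)}_m(u+\Omega)T^{(4)}_m(u)$,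 $M^{(4)}_m=T^{(3)}_m(u)$; $D^{(3)}_4$: $M^{(1)}_m=T^{(2)}_m(u)$, $M^{(2)}_m=T^{(1)}_m(u)T^{(1)}_m(u-\Omega)T^{(1)}_m(u+\Omega)$. *)

theory Defs
  imports Complex_Main "HOL-Library.Poly_Mapping" "HOL-Algebra.QuotRing"
begin

definition cyl :: "complex \<Rightarrow> complex \<Rightarrow> complex set" where
  "cyl c u = {u + of_int k * (2 * of_real pi * \<i> / c) | k. True}"

type_synonym 'v lpoly = "('v \<Rightarrow>\<^sub>0 int) \<Rightarrow>\<^sub>0 int"

text \<open>Laurent polynomial ring over Z in the variables from V (free commutative
  ring on invertible generators indexed by V).\<close>
definition laurent :: "'v set \<Rightarrow> 'v lpoly ring" where
  "laurent V = \<lparr>carrier = {p :: 'v lpoly. \<forall>mon \<in> Poly_Mapping.keys p. Poly_Mapping.keys mon \<subseteq> V},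
                mult = (*), one = 1, zero = 0, add = (+)\<rparr>"

definition var :: "'v \<Rightarrow> 'v lpoly" where
  "var v = Poly_Mapping.single (Poly_Mapping.single v 1) 1"

definition presented :: "'v set \<Rightarrow> 'v lpoly set \<Rightarrow> ('v lpoly set) ring" where
  "presented V rels = laurent V Quot genideal (laurent V) rels"

definition cls :: "'v set \<Rightarrow> 'v lpoly set \<Rightarrow> 'v lpoly \<Rightarrow> 'v lpoly set" where
  "cls V rels p = genideal (laurent V) rels +>\<^bsub>laurent V\<^esub> p"

datatype ttype = A2odd nat | A2even nat | D2 nat | E62 | D43

definition valid_type :: "ttype \<Rightarrow> bool" where
  "valid_type t = (case t of A2odd r \<Rightarrow> r \<ge> 2 | A2even r \<Rightarrow> r \<ge> 1 | D2 r \<Rightarrow> r \<ge> 3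
                    | E62 \<Rightarrow> True | D43 \<Rightarrow> True)"

text \<open>Node set I of the simply laced diagram X_N.\<close>
definition nodes :: "ttype \<Rightarrow> nat set" where
  "nodes t = (case t of A2odd r \<Rightarrow> {1..2*r-1} | A2even r \<Rightarrow> {1..2*r} | D2 r \<Rightarrow> {1..r+1}
                | E62 \<Rightarrow> {1..6} | D43 \<Rightarrow> {1..4})"

definition adj :: "ttype \<Rightarrow> nat \<Rightarrow> nat \<Rightarrow> bool" where
  "adj t a b = (a \<in> nodes t \<and> b \<in> nodes t \<and>
     (case t of
        A2odd r \<Rightarrow> a = b + 1 \<or> b = a + 1
      | A2even r \<Rightarrow> a = b + 1 \<or> b = a + 1
      | D2 r \<Rightarrow> ((a = b + 1 \<or> b = a + 1) \<and> a \<le> r \<and> b \<le> r)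
                \<or> {a, b} = {r - 1, r + 1}
      | E62 \<Rightarrow> {a, b} \<in> {{1,2},{2,3},{3,5},{5,6},{3,4}}
      | D43 \<Rightarrow> {a, b} \<in> {{1,2},{2,3},{2,4}}))"

definition sigma :: "ttype \<Rightarrow> nat \<Rightarrow> nat" where
  "sigma t a = (case t of
        A2odd r \<Rightarrow> 2*r - a
      | A2even r \<Rightarrow> 2*r + 1 - a
      | D2 r \<Rightarrow> (if a = r then r + 1 else if a = r + 1 then r else a)
      | E62 \<Rightarrow> (if a = 1 then 6 else if a = 6 then 1 else if a = 2 then 5
                else if a = 5 then 2 else a)
      | D43 \<Rightarrow> (if a = 1 then 3 else if a = 3 then 4 else if a = 4 then 1 else a))"

definition kappa :: "ttype \<Rightarrow> nat" where
  "kappa t = (case t of D43 \<Rightarrow> 3 | _ \<Rightarrow> 2)"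

definition Isig :: "ttype \<Rightarrow> nat set" where
  "Isig t = (case t of A2odd r \<Rightarrow> {1..r} | A2even r \<Rightarrow> {1..r} | D2 r \<Rightarrow> {1..r}
               | E62 \<Rightarrow> {1..4} | D43 \<Rightarrow> {1..2})"

definition kappa_a :: "ttype \<Rightarrow> nat \<Rightarrow> nat" where
  "kappa_a t a = (if sigma t a = a then kappa t else 1)"

definition Omega :: "ttype \<Rightarrow> complex \<Rightarrow> complex" where
  "Omega t h = 2 * of_real pi * \<i> / (of_nat (kappa t) * h)"

type_synonym gen = "nat \<times> nat \<times> complex set"

definition gensX :: "ttype \<Rightarrow> complex \<Rightarrow> gen set" where
  "gensX t h = {(a, m, cyl h u) | a m u. a \<in> nodes t \<and> m \<ge> 1}"

definition TX :: "complex \<Rightarrow> nat \<Rightarrow> nat \<Rightarrow> complex \<Rightarrow> gen lpoly" where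
  "TX h a m u = (if m = 0 then 1 else var (a, m, cyl h u))"

definition relsX :: "ttype \<Rightarrow> complex \<Rightarrow> gen lpoly set" where
  "relsX t h = {TX h a m (u - 1) * TX h a m (u + 1) - TX h a (m - 1) u * TX h a (m + 1) u
                 - (\<Prod>b\<in>{b. adj t a b}. TX h b m u) | a m u. a \<in> nodes t \<and> m \<ge> 1}"

definition ringX :: "ttype \<Rightarrow> complex \<Rightarrow> gen lpoly set ring" where
  "ringX t h = presented (gensX t h) (relsX t h)"

definition clsX :: "ttype \<Rightarrow> complex \<Rightarrow> gen lpoly \<Rightarrow> gen lpoly set" where
  "clsX t h = cls (gensX t h) (relsX t h)"

definition Jsig :: "ttype \<Rightarrow> complex \<Rightarrow> gen lpoly set set" where
  "Jsig t h = genideal (ringX t h)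
     {clsX t h (TX h a m u) \<ominus>\<^bsub>ringX t h\<^esub> clsX t h (TX h (sigma t a) m (u + Omega t h))
       | a m u. a \<in> nodes t \<and> m \<ge> 1}"

definition quotX :: "ttype \<Rightarrow> complex \<Rightarrow> gen lpoly set set ring" where
  "quotX t h = ringX t h Quot Jsig t h"

definition gensT :: "ttype \<Rightarrow> complex \<Rightarrow> gen set" where
  "gensT t h = {(a, m, cyl (of_nat (kappa_a t a) * h) u) | a m u. a \<in> Isig t \<and> m \<ge> 1}"

definition TT :: "ttype \<Rightarrow> complex \<Rightarrow> nat \<Rightarrow> nat \<Rightarrow> complex \<Rightarrow> gen lpoly" where
  "TT t h a m u = (if m = 0 \<or> a = 0 then 1
                   else var (a, m, cyl (of_nat (kappa_a t a) * h) u))"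

definition Mt :: "ttype \<Rightarrow> complex \<Rightarrow> nat \<Rightarrow> nat \<Rightarrow> complex \<Rightarrow> gen lpoly" where
  "Mt t h a m u = (let T = (\<lambda>b v. TT t h b m v); \<Omega> = Omega t h in
     (case t of
        A2odd r \<Rightarrow> (if a \<le> r - 1 then T (a-1) u * T (a+1) u
                    else T (r-1) u * T (r-1) (u + \<Omega>))
      | A2even r \<Rightarrow> (if a \<le> r - 1 then T (a-1) u * T (a+1) u
                    else T (r-1) u * T r (u + \<Omega>))
      | D2 r \<Rightarrow> (if a \<le> r - 2 then T (a-1) u * T (a+1) u
                 else if a = r - 1 then T (r-2) u * T r u * T r (u + \<Omega>)
                 else T (r-1) u)
      | E62 \<Rightarrow> (if a = 1 then T 2 u
                else if a = 2 then T 1 u * T 3 u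
                else if a = 3 then T 2 u * T 2 (u + \<Omega>) * T 4 u
                else T 3 u)
      | D43 \<Rightarrow> (if a = 1 then T 2 u
                else T 1 u * T 1 (u - \<Omega>) * T 1 (u + \<Omega>))))"

definition relsT :: "ttype \<Rightarrow> complex \<Rightarrow> gen lpoly set" where
  "relsT t h = {TT t h a m (u - 1) * TT t h a m (u + 1) - TT t h a (m - 1) u * TT t h a (m + 1) u
                 - Mt t h a m u | a m u. a \<in> Isig t \<and> m \<ge> 1}"

definition ringT :: "ttype \<Rightarrow> complex \<Rightarrow> gen lpoly set ring" where
  "ringT t h = presented (gensT t h) (relsT t h)"

definition clsT :: "ttype \<Rightarrow> complex \<Rightarrow> gen lpoly \<Rightarrow> gen lpoly set" where
  "clsT t h = cls (gensT t h) (relsT t h)"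

definition clsQ :: "ttype \<Rightarrow> complex \<Rightarrow> gen lpoly \<Rightarrow> gen lpoly set set" where
  "clsQ t h p = Jsig t h +>\<^bsub>ringX t h\<^esub> clsX t h p"

end

theory Submission
  imports Defs
begin

(* Write a = sigma^d(rho a) with rho a in I_sigma. Folding sends the generator T^(a)_m(u) of T(X_N)
   to T^(rho a)_m(u - d Omega). It respects the T-system relations because the neighbours of a in
   X_N fold onto exactly the factors of M^(rho a)_m, and it identifies the generators at a and at
   sigma a shifted by Omega, so it induces a surjection T(X_N) -> T(X^(kappa)_N) killing J^sigma.
   Conversely, modulo J^sigma every generator equals a generator at a node of I_sigma, so sending
   T^(b)_m(u) back to the class of T^(b)_m(u) is well defined (each twisted relation is the folding
   of an untwisted one) and inverts the folding; hence its kernel is exactly J^sigma. *)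

section \<open>Laurent rings and variable substitution\<close>

definition lpolys :: "'v set \<Rightarrow> 'v lpoly set" where
  "lpolys V = {p. \<forall>mn \<in> Poly_Mapping.keys p. Poly_Mapping.keys mn \<subseteq> V}"

lemma laurent_carrier [simp]: "carrier (laurent V) = lpolys V"
  and laurent_mult [simp]: "mult (laurent V) = (*)"
  and laurent_add [simp]: "add (laurent V) = (+)"
  and laurent_one [simp]: "one (laurent V) = 1"
  and laurent_zero [simp]: "zero (laurent V) = 0"
  by (simp_all add: laurent_def lpolys_def)

lemma lpolys_add: "p \<in> lpolys V \<Longrightarrow> q \<in> lpolys V \<Longrightarrow> p + q \<in> lpolys V"
  using Poly_Mapping.keys_add[of p q] unfolding lpolys_def by fastforce

lemma lpolys_uminus: "p \<in> lpolys V \<Longrightarrow> - p \<in> lpolys V"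
  unfolding lpolys_def by (simp add: Poly_Mapping.keys_minus)

lemma lpolys_diff: "p \<in> lpolys V \<Longrightarrow> q \<in> lpolys V \<Longrightarrow> p - q \<in> lpolys V"
  unfolding diff_conv_add_uminus by (intro lpolys_add lpolys_uminus)

lemma lpolys_mult:
  assumes p: "p \<in> lpolys V" and q: "q \<in> lpolys V"
  shows "p * q \<in> lpolys V"
proof (unfold lpolys_def, intro CollectI ballI)
  fix mn assume "mn \<in> Poly_Mapping.keys (p * q)"
  then obtain a b where "mn = a + b" "a \<in> Poly_Mapping.keys p" "b \<in> Poly_Mapping.keys q"
    using Poly_Mapping.keys_mult by blast
  then show "Poly_Mapping.keys mn \<subseteq> V"
    using p q Poly_Mapping.keys_add[of a b] unfolding lpolys_def by blast
qed

lemma lpolys_zero: "0 \<in> lpolys V"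
  and lpolys_one: "1 \<in> lpolys V"
  unfolding lpolys_def by simp_all

lemma lpolys_single: "Poly_Mapping.keys mn \<subseteq> V \<Longrightarrow> Poly_Mapping.single mn c \<in> lpolys V"
  unfolding lpolys_def by simp

lemma lpolys_var: "v \<in> V \<Longrightarrow> var v \<in> lpolys V"
  unfolding var_def by (rule lpolys_single) simp

text \<open>No finiteness is needed: an infinite product is \<open>1\<close>.\<close>
lemma lpolys_prod: "(\<And>x. x \<in> A \<Longrightarrow> f x \<in> lpolys V) \<Longrightarrow> prod f A \<in> lpolys V"
  by (induction A rule: infinite_finite_induct) (auto intro: lpolys_one lpolys_mult)

lemma laurent_cring: "cring (laurent V)"
proof (rule cringI)
  show "abelian_group (laurent V)"
  proof (rule abelian_groupI)
    fix x assume "x \<in> carrier (laurent V)"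
    then show "\<exists>y\<in>carrier (laurent V). y \<oplus>\<^bsub>laurent V\<^esub> x = \<zero>\<^bsub>laurent V\<^esub>"
      by (intro bexI[of _ "-x"]) (auto intro: lpolys_uminus)
  qed (auto intro: lpolys_add lpolys_zero simp: add.assoc add.commute)
  show "comm_monoid (laurent V)"
    by (rule comm_monoidI) (auto intro: lpolys_mult lpolys_one simp: mult.assoc mult.commute)
qed (simp add: distrib_right)

interpretation laurent: cring "laurent V" for V
  by (rule laurent_cring)

lemma laurent_minus [simp]: "p \<in> lpolys V \<Longrightarrow> q \<in> lpolys V \<Longrightarrow> p \<ominus>\<^bsub>laurent V\<^esub> q = p - q"
proof -
  assume "p \<in> lpolys V" "q \<in> lpolys V"
  moreover have "\<ominus>\<^bsub>laurent V\<^esub> q = - q" if "q \<in> lpolys V" for q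
    using that by (intro laurent.add.inv_equality) (auto intro: lpolys_uminus)
  ultimately show ?thesis by (simp add: a_minus_def)
qed

lemma ring_hom_laurent_diff:
  assumes "H \<in> ring_hom (laurent V) S" "cring S" "p \<in> lpolys V" "q \<in> lpolys V"
  shows "H (p - q) = H p \<ominus>\<^bsub>S\<^esub> H q"
proof -
  interpret ring_hom_cring "laurent V" S H
    by (intro ring_hom_cring.intro ring_hom_cring_axioms.intro laurent_cring assms(1,2))
  have "p - q = p \<oplus>\<^bsub>laurent V\<^esub> \<ominus>\<^bsub>laurent V\<^esub> q"
    using assms(3,4) laurent_minus by (metis a_minus_def)
  then have "H (p - q) = H p \<oplus>\<^bsub>S\<^esub> H (\<ominus>\<^bsub>laurent V\<^esub> q)"
    using assms(3,4) by (simp only:) (rule hom_add, auto intro: laurent.a_inv_closed[simplified])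
  then show ?thesis
    using assms(3,4) by (simp add: a_minus_def)
qed

lemma ring_hom_laurent_monom_inverse:
  assumes H: "H \<in> ring_hom (laurent V) S" and b: "Poly_Mapping.keys b \<subseteq> V"
  shows "H (frag_of b) \<otimes>\<^bsub>S\<^esub> H (frag_of (- b)) = \<one>\<^bsub>S\<^esub>"
proof -
  have L: "frag_of b \<in> lpolys V" "frag_of (- b) \<in> lpolys V"
    using b by (simp_all add: lpolys_single Poly_Mapping.keys_minus)
  have "H (frag_of b) \<otimes>\<^bsub>S\<^esub> H (frag_of (- b)) = H (frag_of b * frag_of (- b))"
    using ring_hom_mult[OF H, of "frag_of b" "frag_of (- b)"] L by simp
  also have "frag_of b * frag_of (- b) = 1"
    by (simp add: mult_single)
  finally show ?thesis using ring_hom_one[OF H] by simp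
qed

lemma laurent_hom_monom_eqI:
  assumes S: "cring S" and H: "H \<in> ring_hom (laurent V) S" and H': "H' \<in> ring_hom (laurent V) S"
    and vars: "\<And>v. v \<in> V \<Longrightarrow> H (var v) = H' (var v)"
    and mn: "Poly_Mapping.keys mn \<subseteq> V"
  shows "H (frag_of mn) = H' (frag_of mn)"
proof -
  interpret S: cring S by fact
  from mn have "Poly_Mapping.keys mn \<subseteq> V \<and> H (frag_of mn) = H' (frag_of mn)"
  proof (induction mn rule: frag_induction)
    case zero
    then show ?case using ring_hom_one[OF H] ring_hom_one[OF H'] by simp
  next
    case (one v)
    then show ?case using vars[of v] by (simp add: var_def)
  next
    case (diff a b)
    have V: "Poly_Mapping.keys a \<subseteq> V" "Poly_Mapping.keys b \<subseteq> V" "Poly_Mapping.keys (- b) \<subseteq> V"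
      using diff by (auto simp: Poly_Mapping.keys_minus)
    then have keys: "Poly_Mapping.keys (a - b) \<subseteq> V"
      using Poly_Mapping.keys_add[of a "- b"] by auto
    have L: "frag_of a \<in> lpolys V" "frag_of b \<in> lpolys V" "frag_of (- b) \<in> lpolys V"
      using V by (simp_all only: lpolys_single)
    have "H (frag_of (- b)) = H' (frag_of (- b))"
    proof (rule S.inv_unique[where x = "H (frag_of b)"])
      show "H (frag_of (- b)) \<otimes>\<^bsub>S\<^esub> H (frag_of b) = \<one>\<^bsub>S\<^esub>"
        using ring_hom_laurent_monom_inverse[OF H V(2)] L ring_hom_closed[OF H]
        by (simp add: S.m_comm)
      show "H (frag_of b) \<otimes>\<^bsub>S\<^esub> H' (frag_of (- b)) = \<one>\<^bsub>S\<^esub>"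
        using ring_hom_laurent_monom_inverse[OF H' V(2)] diff by simp
    qed (use L ring_hom_closed[OF H] ring_hom_closed[OF H'] in auto)
    moreover have "frag_of (a - b) = frag_of a * frag_of (- b)"
      by (simp add: mult_single)
    ultimately show ?case
      using keys diff L ring_hom_mult[OF H] ring_hom_mult[OF H'] by simp
  qed
  then show ?thesis ..
qed

lemma laurent_hom_eqI:
  assumes S: "cring S" and H: "H \<in> ring_hom (laurent V) S" and H': "H' \<in> ring_hom (laurent V) S"
    and vars: "\<And>v. v \<in> V \<Longrightarrow> H (var v) = H' (var v)"
    and p: "p \<in> lpolys V"
  shows "H p = H' p"
proof -
  have "Poly_Mapping.keys p \<subseteq> {mn. Poly_Mapping.keys mn \<subseteq> V}"
    using p by (auto simp: lpolys_def)
  then have "p \<in> lpolys V \<and> H p = H' p"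
  proof (induction p rule: frag_induction)
    case zero
    have "ring S" using S by (rule cring.axioms(1))
    then show ?case
      using ring_hom_zero[OF H laurent.ring_axioms] ring_hom_zero[OF H' laurent.ring_axioms]
      by (simp add: lpolys_zero)
  next
    case (one mn)
    then show ?case using laurent_hom_monom_eqI[OF S H H' vars] by (simp add: lpolys_single)
  next
    case (diff a b)
    then show ?case
      using ring_hom_laurent_diff[OF H S] ring_hom_laurent_diff[OF H' S] by (simp add: lpolys_diff)
  qed
  then show ?thesis ..
qed

definition rename_monom :: "('v \<Rightarrow> 'w) \<Rightarrow> ('v \<Rightarrow>\<^sub>0 int) \<Rightarrow> ('w \<Rightarrow>\<^sub>0 int)" where
  "rename_monom g = frag_extend (frag_of \<circ> g)"

definition rename_vars :: "('v \<Rightarrow> 'w) \<Rightarrow> 'v lpoly \<Rightarrow> 'w lpoly" where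
  "rename_vars g = frag_extend (frag_of \<circ> rename_monom g)"

lemma rename_monom_add: "rename_monom g (a + b) = rename_monom g a + rename_monom g b"
  by (simp add: rename_monom_def frag_extend_add)

lemma rename_vars_zero [simp]: "rename_vars g 0 = 0"
  by (simp add: rename_vars_def)

lemma rename_vars_add: "rename_vars g (p + q) = rename_vars g p + rename_vars g q"
  by (simp add: rename_vars_def frag_extend_add)

lemma rename_vars_diff: "rename_vars g (p - q) = rename_vars g p - rename_vars g q"
  by (simp add: rename_vars_def frag_extend_diff)

lemma rename_vars_monom: "rename_vars g (frag_of mn) = frag_of (rename_monom g mn)"
  by (simp add: rename_vars_def)

lemma rename_vars_one [simp]: "rename_vars g 1 = 1"
  using rename_vars_monom[of g 0] by (simp add: rename_monom_def)

lemma rename_vars_var [simp]: "rename_vars g (var v) = var (g v)"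
  by (simp add: var_def rename_vars_monom rename_monom_def)

lemma rename_vars_mult: "rename_vars g (p * q) = rename_vars g p * rename_vars g q"
proof -
  have monom: "rename_vars g (frag_of mn * q) = rename_vars g (frag_of mn) * rename_vars g q" for mn
    using subset_UNIV[of "Poly_Mapping.keys q"]
    by (induction q rule: frag_induction)
      (simp_all add: mult_single rename_vars_monom rename_monom_add right_diff_distrib
        rename_vars_diff)
  show ?thesis
    using subset_UNIV[of "Poly_Mapping.keys p"]
    by (induction p rule: frag_induction) (simp_all add: monom left_diff_distrib rename_vars_diff)
qed

lemma rename_vars_prod: "rename_vars g (prod f A) = (\<Prod>x\<in>A. rename_vars g (f x))"
  by (induction A rule: infinite_finite_induct) (auto simp: rename_vars_mult)

lemma rename_vars_comp: "rename_vars g (rename_vars f p) = rename_vars (g \<circ> f) p"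
proof -
  have "rename_monom g (rename_monom f mn) = rename_monom (g \<circ> f) mn" for mn
    unfolding rename_monom_def using frag_extend_compose[of "frag_of \<circ> g" f mn]
    by (simp add: comp_assoc)
  then have "(frag_of \<circ> rename_monom g) \<circ> rename_monom f = frag_of \<circ> rename_monom (g \<circ> f)"
    by auto
  then show ?thesis
    unfolding rename_vars_def
    using frag_extend_compose[of "frag_of \<circ> rename_monom g" "rename_monom f" p]
    by (simp add: comp_assoc)
qed

lemma rename_vars_cong:
  assumes p: "p \<in> lpolys V" and g: "\<And>v. v \<in> V \<Longrightarrow> g v = g' v"
  shows "rename_vars g p = rename_vars g' p"
proof (unfold rename_vars_def, rule frag_extend_eq)
  fix mn assume "mn \<in> Poly_Mapping.keys p"
  then have "Poly_Mapping.keys mn \<subseteq> V" using p by (auto simp: lpolys_def)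
  then have "rename_monom g mn = rename_monom g' mn"
    unfolding rename_monom_def using g by (intro frag_extend_eq) auto
  then show "(frag_of \<circ> rename_monom g) mn = (frag_of \<circ> rename_monom g') mn" by simp
qed

lemma rename_vars_id: "rename_vars id (p :: 'v lpoly) = p"
proof -
  have "frag_of \<circ> rename_monom id = (frag_of :: ('v \<Rightarrow>\<^sub>0 int) \<Rightarrow> _)"
    unfolding rename_monom_def by (auto simp flip: frag_expansion)
  then show ?thesis
    unfolding rename_vars_def using frag_expansion[of p] by simp
qed

lemma rename_vars_lpolys:
  assumes p: "p \<in> lpolys V" and g: "g ` V \<subseteq> W"
  shows "rename_vars g p \<in> lpolys W"
proof (unfold lpolys_def, intro CollectI ballI)
  fix mn assume "mn \<in> Poly_Mapping.keys (rename_vars g p)"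
  then obtain mn' where mn': "mn' \<in> Poly_Mapping.keys p" "mn = rename_monom g mn'"
    using keys_frag_extend[of "frag_of \<circ> rename_monom g" p] by (auto simp: rename_vars_def)
  have "Poly_Mapping.keys (rename_monom g mn') \<subseteq> g ` Poly_Mapping.keys mn'"
    using keys_frag_extend[of "frag_of \<circ> g" mn'] by (auto simp: rename_monom_def)
  then show "Poly_Mapping.keys mn \<subseteq> W"
    using mn' p g unfolding lpolys_def by blast
qed

lemma rename_vars_hom: "g ` V \<subseteq> W \<Longrightarrow> rename_vars g \<in> ring_hom (laurent V) (laurent W)"
  by (rule ring_hom_memI)
    (auto simp: rename_vars_lpolys rename_vars_mult rename_vars_add)

section \<open>Homomorphisms out of quotients and presented rings\<close>

definition quot_lift :: "('a \<Rightarrow> 'b) \<Rightarrow> 'a set \<Rightarrow> 'b" where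
  "quot_lift H X = the_elem (H ` X)"

lemma quot_lift_rcos:
  assumes H: "ring_hom_ring R S H" and I: "ideal I R"
    and ker: "\<And>i. i \<in> I \<Longrightarrow> H i = \<zero>\<^bsub>S\<^esub>" and x: "x \<in> carrier R"
  shows "quot_lift H (I +>\<^bsub>R\<^esub> x) = H x"
proof -
  interpret ring_hom_ring R S H by fact
  interpret I: ideal I R by fact
  have "H (i \<oplus>\<^bsub>R\<^esub> x) = H x" if "i \<in> I" for i
    using that ker x I.a_Hcarr by simp
  moreover have "x \<in> I +>\<^bsub>R\<^esub> x"
    using x by (rule I.a_rcos_self)
  ultimately have "H ` (I +>\<^bsub>R\<^esub> x) = {H x}"
    by (auto simp: a_r_coset_def' image_iff)
  then show ?thesis by (simp add: quot_lift_def)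
qed

lemma quot_lift_hom:
  assumes H: "ring_hom_ring R S H" and I: "ideal I R"
    and ker: "\<And>i. i \<in> I \<Longrightarrow> H i = \<zero>\<^bsub>S\<^esub>"
  shows "quot_lift H \<in> ring_hom (R Quot I) S"
proof -
  interpret I: ideal I R by fact
  have hom: "H \<in> ring_hom R S" using H by (rule ring_hom_ring.homh)
  note val = quot_lift_rcos[OF H I ker]
  have cosets: "carrier (R Quot I) = (\<lambda>x. I +>\<^bsub>R\<^esub> x) ` carrier R"
    by (auto simp: FactRing_def A_RCOSETS_def')
  show ?thesis
  proof (rule ring_hom_memI)
    fix X assume "X \<in> carrier (R Quot I)"
    then show "quot_lift H X \<in> carrier S" using cosets val ring_hom_closed[OF hom] by auto
  next
    fix X Y assume "X \<in> carrier (R Quot I)" "Y \<in> carrier (R Quot I)"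
    then obtain x y where xy: "x \<in> carrier R" "X = I +>\<^bsub>R\<^esub> x" "y \<in> carrier R" "Y = I +>\<^bsub>R\<^esub> y"
      using cosets by auto
    have "X \<otimes>\<^bsub>R Quot I\<^esub> Y = I +>\<^bsub>R\<^esub> (x \<otimes>\<^bsub>R\<^esub> y)"
      using xy by (simp add: FactRing_def I.rcoset_mult_add)
    then show "quot_lift H (X \<otimes>\<^bsub>R Quot I\<^esub> Y) = quot_lift H X \<otimes>\<^bsub>S\<^esub> quot_lift H Y"
      using xy val ring_hom_mult[OF hom] by simp
    have "X \<oplus>\<^bsub>R Quot I\<^esub> Y = I +>\<^bsub>R\<^esub> (x \<oplus>\<^bsub>R\<^esub> y)"
      using xy by (simp add: FactRing_def I.a_rcos_sum)
    then show "quot_lift H (X \<oplus>\<^bsub>R Quot I\<^esub> Y) = quot_lift H X \<oplus>\<^bsub>S\<^esub> quot_lift H Y"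
      using xy val ring_hom_add[OF hom] by simp
  next
    show "quot_lift H \<one>\<^bsub>R Quot I\<^esub> = \<one>\<^bsub>S\<^esub>"
      using val[of "\<one>\<^bsub>R\<^esub>"] ring_hom_one[OF hom] by (simp add: FactRing_def)
  qed
qed

lemma a_kernel_eqI:
  assumes \<phi>: "ring_hom_ring R S \<phi>" and J: "ideal J R" and J_ker: "J \<subseteq> a_kernel R S \<phi>"
    and \<psi>: "\<psi> \<in> ring_hom S (R Quot J)"
    and factor: "\<And>x. x \<in> carrier R \<Longrightarrow> \<psi> (\<phi> x) = J +>\<^bsub>R\<^esub> x"
  shows "a_kernel R S \<phi> = J"
proof (rule subset_antisym[OF _ J_ker])
  interpret J: ideal J R by fact
  have S: "ring S" using \<phi> by (rule ring_hom_ring.axioms(2))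
  show "a_kernel R S \<phi> \<subseteq> J"
  proof
    fix x assume "x \<in> a_kernel R S \<phi>"
    then have x: "x \<in> carrier R" "\<phi> x = \<zero>\<^bsub>S\<^esub>" by (auto simp: a_kernel_def')
    have "J +>\<^bsub>R\<^esub> x = \<psi> (\<phi> x)" using factor x(1) by simp
    also have "\<dots> = \<zero>\<^bsub>R Quot J\<^esub>"
      using x(2) ring_hom_zero[OF \<psi> S J.quotient_is_ring] by simp
    finally have "J +>\<^bsub>R\<^esub> x = J" by (simp add: FactRing_def)
    then show "x \<in> J" using J.rcos_const_imp_mem x(1) by simp
  qed
qed

lemma presented_ideal:
  "rels \<subseteq> lpolys V \<Longrightarrow> ideal (genideal (laurent V) rels) (laurent V)"
  by (rule laurent.genideal_ideal) simp

lemma presented_cring: "rels \<subseteq> lpolys V \<Longrightarrow> cring (presented V rels)"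
  unfolding presented_def by (rule ideal.quotient_is_cring[OF presented_ideal laurent_cring])

lemma cls_hom: "rels \<subseteq> lpolys V \<Longrightarrow> cls V rels \<in> ring_hom (laurent V) (presented V rels)"
  unfolding presented_def cls_def
  by (rule ideal.rcos_ring_hom[OF presented_ideal, unfolded comp_def])

lemma presented_carrier_cls:
  assumes "Y \<in> carrier (presented V rels)"
  obtains p where "p \<in> lpolys V" "Y = cls V rels p"
  using assms by (auto simp: presented_def cls_def FactRing_def A_RCOSETS_def')

lemma cls_rel:
  assumes "rels \<subseteq> lpolys V" "r \<in> rels"
  shows "cls V rels r = \<zero>\<^bsub>presented V rels\<^esub>"
proof -
  have "r \<in> genideal (laurent V) rels" using assms laurent.genideal_self by auto
  then show ?thesis
    using laurent.a_rcos_zero[OF presented_ideal[OF assms(1)]]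
    by (simp add: cls_def presented_def FactRing_def)
qed

lemma presented_lift:
  assumes rels: "rels \<subseteq> lpolys V" and S: "cring S" and H: "H \<in> ring_hom (laurent V) S"
    and kill: "\<And>r. r \<in> rels \<Longrightarrow> H r = \<zero>\<^bsub>S\<^esub>"
  shows "quot_lift H \<in> ring_hom (presented V rels) S"
    and "\<And>p. p \<in> lpolys V \<Longrightarrow> quot_lift H (cls V rels p) = H p"
proof -
  have H_ring: "ring_hom_ring (laurent V) S H"
    using laurent.ring_axioms cring.axioms(1)[OF S] H by (rule ring_hom_ringI2)
  have "genideal (laurent V) rels \<subseteq> a_kernel (laurent V) S H"
    using rels kill
    by (intro laurent.genideal_minimal[OF ring_hom_ring.kernel_is_ideal[OF H_ring]])
      (auto simp: a_kernel_def')
  then have ker: "\<And>i. i \<in> genideal (laurent V) rels \<Longrightarrow> H i = \<zero>\<^bsub>S\<^esub>"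
    by (auto simp: a_kernel_def')
  show "quot_lift H \<in> ring_hom (presented V rels) S"
    unfolding presented_def by (rule quot_lift_hom[OF H_ring presented_ideal[OF rels] ker])
  show "quot_lift H (cls V rels p) = H p" if "p \<in> lpolys V" for p
    using quot_lift_rcos[OF H_ring presented_ideal[OF rels] ker, of p] that by (simp add: cls_def)
qed

lemma prod_eq_pair_if_subset:
  assumes "A \<subseteq> {x, y}" "x \<noteq> y" "\<And>b. b \<in> {x, y} \<Longrightarrow> b \<notin> A \<Longrightarrow> f b = 1"
  shows "prod f A = f x * f y"
proof -
  have "prod f A = prod f {x, y}"
    using assms by (intro prod.mono_neutral_left) auto
  then show ?thesis using assms(2) by simp
qed

lemma funpow_fixpoint: "f x = x \<Longrightarrow> (f ^^ n) x = x"
  by (induction n) simp_all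

section \<open>Folding the diagram \<open>X\<^sub>N\<close> onto \<open>I\<^sub>\<sigma>\<close>\<close>

text \<open>Every node \<open>a\<close> of \<open>X\<^sub>N\<close> is \<open>\<sigma>\<^sup>d(\<rho> a)\<close> with \<open>\<rho> a \<in> I\<^sub>\<sigma>\<close>; \<open>fold_node\<close> is \<open>\<rho>\<close> and
  \<open>fold_shift\<close> is the exponent \<open>d\<close>.\<close>
definition fold_node :: "ttype \<Rightarrow> nat \<Rightarrow> nat" where
  "fold_node t a = (case t of
        A2odd r \<Rightarrow> (if a \<le> r then a else 2*r - a)
      | A2even r \<Rightarrow> (if a \<le> r then a else 2*r + 1 - a)
      | D2 r \<Rightarrow> (if a = r + 1 then r else a)
      | E62 \<Rightarrow> (if a = 5 then 2 else if a = 6 then 1 else a)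
      | D43 \<Rightarrow> (if a = 3 \<or> a = 4 then 1 else a))"

definition fold_shift :: "ttype \<Rightarrow> nat \<Rightarrow> nat" where
  "fold_shift t a = (case t of
        A2odd r \<Rightarrow> (if a \<le> r then 0 else 1)
      | A2even r \<Rightarrow> (if a \<le> r then 0 else 1)
      | D2 r \<Rightarrow> (if a = r + 1 then 1 else 0)
      | E62 \<Rightarrow> (if a \<ge> 5 then 1 else 0)
      | D43 \<Rightarrow> (if a = 3 then 1 else if a = 4 then 2 else 0))"

lemma Isig_subset_nodes: "valid_type t \<Longrightarrow> Isig t \<subseteq> nodes t"
  by (cases t) (auto simp: valid_type_def Isig_def nodes_def)

lemma zero_notin_Isig: "0 \<notin> Isig t"
  by (cases t) (auto simp: Isig_def)

lemma fold_node_Isig: "a \<in> Isig t \<Longrightarrow> fold_node t a = a"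
  by (cases t) (auto simp: Isig_def fold_node_def)

lemma fold_shift_Isig: "a \<in> Isig t \<Longrightarrow> fold_shift t a = 0"
  by (cases t) (auto simp: Isig_def fold_shift_def)

lemma fold_node_in_Isig: "valid_type t \<Longrightarrow> a \<in> nodes t \<Longrightarrow> fold_node t a \<in> Isig t"
  by (cases t) (auto simp: valid_type_def Isig_def nodes_def fold_node_def)

lemma sigma_in_nodes: "valid_type t \<Longrightarrow> a \<in> nodes t \<Longrightarrow> sigma t a \<in> nodes t"
  by (cases t) (auto simp: valid_type_def sigma_def nodes_def)

lemma sigma_pow_fold_node:
  "valid_type t \<Longrightarrow> a \<in> nodes t \<Longrightarrow> (sigma t ^^ fold_shift t a) (fold_node t a) = a"
  by (cases t)
    (auto simp: valid_type_def sigma_def nodes_def fold_node_def fold_shift_def numeral_2_eq_2)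

lemma fold_node_sigma: "valid_type t \<Longrightarrow> a \<in> nodes t \<Longrightarrow> fold_node t (sigma t a) = fold_node t a"
  by (cases t) (auto simp: valid_type_def sigma_def nodes_def fold_node_def)

lemma fold_shift_sigma:
  "valid_type t \<Longrightarrow> a \<in> nodes t \<Longrightarrow> sigma t (fold_node t a) = fold_node t a \<or>
     int (kappa t) dvd int (fold_shift t (sigma t a)) - int (fold_shift t a) - 1"
  by (cases t)
    (auto simp: valid_type_def sigma_def nodes_def fold_node_def fold_shift_def kappa_def)

lemma kappa_ge_2: "kappa t \<ge> 2"
  by (cases t) (auto simp: kappa_def)

lemma kappa_a_cases: "kappa_a t b = 1 \<or> (kappa_a t b = kappa t \<and> sigma t b = b)"
  by (auto simp: kappa_a_def)

lemma kappa_a_pos: "kappa_a t b > 0"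
  using kappa_ge_2[of t] by (auto simp: kappa_a_def)

lemma adj_nodes: "adj t a b \<Longrightarrow> b \<in> nodes t"
  by (simp add: adj_def)

lemma mem_cyl_iff: "w \<in> cyl c v \<longleftrightarrow> (\<exists>k::int. w - v = of_int k * (2 * of_real pi * \<i> / c))"
proof
  assume "w \<in> cyl c v"
  then show "\<exists>k::int. w - v = of_int k * (2 * of_real pi * \<i> / c)"
    unfolding cyl_def by auto
next
  assume "\<exists>k::int. w - v = of_int k * (2 * of_real pi * \<i> / c)"
  then obtain k :: int where "w - v = of_int k * (2 * of_real pi * \<i> / c)" ..
  then have "w = v + of_int k * (2 * of_real pi * \<i> / c)" by (metis add.commute diff_add_cancel)
  then show "w \<in> cyl c v" unfolding cyl_def by blast
qed

lemma cyl_self: "u \<in> cyl c u"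
  unfolding mem_cyl_iff by (auto intro: exI[of _ 0])

lemma cyl_eq:
  assumes "c \<noteq> 0" and "x - y = of_int k * (2 * of_real pi * \<i> / c)"
  shows "cyl c x = cyl c y"
proof -
  let ?p = "2 * of_real pi * \<i> / c"
  have x: "x = y + of_int k * ?p" using assms(2) by (simp add: algebra_simps)
  have shift: "z - x = of_int j * ?p \<longleftrightarrow> z - y = of_int (j + k) * ?p" for z j
    unfolding x by (auto simp: algebra_simps add_divide_distrib)
  have "(\<exists>j::int. z - x = of_int j * ?p) \<longleftrightarrow> (\<exists>j::int. z - y = of_int j * ?p)" for z
  proof
    assume "\<exists>j::int. z - x = of_int j * ?p"
    then show "\<exists>j::int. z - y = of_int j * ?p" using shift by blast
  next
    assume "\<exists>j::int. z - y = of_int j * ?p"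
    then obtain j :: int where "z - y = of_int j * ?p" ..
    then have "z - x = of_int (j - k) * ?p" using shift[of z "j - k"] by simp
    then show "\<exists>j::int. z - x = of_int j * ?p" ..
  qed
  then show ?thesis unfolding set_eq_iff mem_cyl_iff by blast
qed

lemma some_in_cyl: "(SOME v. v \<in> cyl c u) \<in> cyl c u"
  by (rule someI, rule cyl_self)

lemma cyl_eq_if_mem: "c \<noteq> 0 \<Longrightarrow> w \<in> cyl c v \<Longrightarrow> cyl c w = cyl c v"
  by (metis mem_cyl_iff cyl_eq)

lemma cyl_coarsen:
  assumes c: "c \<noteq> 0" and n: "n > 0" and w: "w \<in> cyl c v"
  shows "cyl (of_nat n * c) (w - z) = cyl (of_nat n * c) (v - z)"
proof -
  obtain k where "w - v = of_int k * (2 * of_real pi * \<i> / c)"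
    using w by (auto simp: mem_cyl_iff)
  then have "(w - z) - (v - z) = of_int (k * int n) * (2 * of_real pi * \<i> / (of_nat n * c))"
    using c n by (simp add: field_simps)
  then show ?thesis by (rule cyl_eq[rotated]) (use c n in simp)
qed

definition fold_T :: "ttype \<Rightarrow> complex \<Rightarrow> nat \<Rightarrow> nat \<Rightarrow> complex \<Rightarrow> gen lpoly" where
  "fold_T t h a m u = TT t h (fold_node t a) m (u - of_nat (fold_shift t a) * Omega t h)"

lemma TT_zero_node [simp]: "TT t h 0 m x = 1"
  by (simp add: TT_def)

locale twisted_T_system =
  fixes t :: ttype and h :: complex
  assumes valid: "valid_type t" and h_nonzero: "h \<noteq> 0"
begin

lemma TT_shift_kappa_Omega:
  assumes "x - y = of_int k * (of_nat (kappa t) * Omega t h)"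
  shows "TT t h b m x = TT t h b m y"
proof -
  have kappa: "of_nat (kappa t) \<noteq> (0::complex)" using kappa_ge_2[of t] by simp
  have "cyl (of_nat (kappa_a t b) * h) x = cyl (of_nat (kappa_a t b) * h) y"
  proof (cases "kappa_a t b = 1")
    case True
    have "of_nat (kappa t) * Omega t h = 2 * of_real pi * \<i> / h"
      using kappa h_nonzero by (simp add: Omega_def field_simps)
    then show ?thesis using True assms h_nonzero by (intro cyl_eq[where k = k]) auto
  next
    case False
    then have "kappa_a t b = kappa t" using kappa_a_cases[of t b] by auto
    moreover have
      "x - y = of_int (k * int (kappa t)) * (2 * of_real pi * \<i> / (of_nat (kappa t) * h))"
      using assms h_nonzero kappa by (simp add: Omega_def field_simps)
    ultimately show ?thesis
      using h_nonzero kappa by (intro cyl_eq[where k = "k * int (kappa t)"]) auto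
  qed
  then show ?thesis by (simp add: TT_def)
qed

lemma TT_shift_Omega_fixed:
  assumes "sigma t b = b" and "x - y = of_int k * Omega t h"
  shows "TT t h b m x = TT t h b m y"
proof -
  have kappa: "of_nat (kappa t) \<noteq> (0::complex)" using kappa_ge_2[of t] by simp
  have "kappa_a t b = kappa t" using assms(1) by (simp add: kappa_a_def)
  moreover have "x - y = of_int k * (2 * of_real pi * \<i> / (of_nat (kappa t) * h))"
    using assms(2) by (simp add: Omega_def)
  ultimately have "cyl (of_nat (kappa_a t b) * h) x = cyl (of_nat (kappa_a t b) * h) y"
    using h_nonzero kappa by (intro cyl_eq) auto
  then show ?thesis by (simp add: TT_def)
qed

lemma fold_T_sigma:
  assumes a: "a \<in> nodes t"
  shows "fold_T t h (sigma t a) m (u + Omega t h) = fold_T t h a m u"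
proof -
  let ?\<Omega> = "Omega t h"
  let ?k = "int (fold_shift t (sigma t a)) - int (fold_shift t a) - 1"
  have diff: "(u - of_nat (fold_shift t a) * ?\<Omega>) - (u + ?\<Omega> - of_nat (fold_shift t (sigma t a)) * ?\<Omega>)
      = of_int ?k * ?\<Omega>"
    by (simp add: algebra_simps)
  from fold_shift_sigma[OF valid a]
  have "TT t h (fold_node t a) m (u - of_nat (fold_shift t a) * ?\<Omega>)
      = TT t h (fold_node t a) m (u + ?\<Omega> - of_nat (fold_shift t (sigma t a)) * ?\<Omega>)"
  proof
    assume "sigma t (fold_node t a) = fold_node t a"
    then show ?thesis by (rule TT_shift_Omega_fixed[OF _ diff])
  next
    assume "int (kappa t) dvd ?k"
    then obtain j where j: "?k = int (kappa t) * j" ..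
    have "of_int ?k * ?\<Omega> = of_int j * (of_nat (kappa t) * ?\<Omega>)"
      unfolding j by (simp add: mult_ac)
    with diff show ?thesis by (intro TT_shift_kappa_Omega) simp
  qed
  then show ?thesis using fold_node_sigma[OF valid a] by (simp add: fold_T_def)
qed

lemmas folding_defs = fold_T_def fold_node_def fold_shift_def Mt_def Let_def

lemma adj_prod_fold_T_A2odd:
  assumes type: "t = A2odd r" and a: "a \<in> nodes t"
  shows "(\<Prod>b\<in>{b. adj t a b}. fold_T t h b m u)
       = Mt t h (fold_node t a) m (u - of_nat (fold_shift t a) * Omega t h)"
proof -
  have t: "t = A2odd r" "r \<ge> 2" using type valid by (simp_all add: valid_type_def)
  let ?\<Omega> = "Omega t h"
  have a1: "1 \<le> a" "a \<le> 2*r - 1" using a t by (auto simp: nodes_def)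
  have "(\<Prod>b\<in>{b. adj t a b}. fold_T t h b m u) = fold_T t h (a - 1) m u * fold_T t h (a + 1) m u"
  proof (rule prod_eq_pair_if_subset[where f = "\<lambda>b. fold_T t h b m u"])
    show "{b. adj t a b} \<subseteq> {a - 1, a + 1}" using t by (auto simp: adj_def)
    fix b assume "b \<in> {a - 1, a + 1}" "b \<notin> {b. adj t a b}"
    then have "b = 0 \<or> b = 2 * r" using t a1 by (auto simp: adj_def nodes_def)
    then show "fold_T t h b m u = 1" using t by (auto simp: fold_T_def fold_node_def)
  qed (use a1 in auto)
  also have "\<dots> = Mt t h (fold_node t a) m (u - of_nat (fold_shift t a) * ?\<Omega>)"
  proof -
    consider "a < r" | "a = r" | "a > r" by linarith
    then show ?thesis
    proof cases
      case 1
      then have "a \<le> r - 1" "a - 1 \<le> r" by auto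
      then show ?thesis using t a1 1 by (simp add: folding_defs)
    next
      case 2
      have "TT t h (r - 1) m (u - ?\<Omega>) = TT t h (r - 1) m (u + ?\<Omega>)"
        by (rule TT_shift_kappa_Omega[where k="-1"]) (simp add: t kappa_def)
      then show ?thesis using t a1 2 by (auto simp: folding_defs)
    next
      case 3
      show ?thesis
      proof (cases "a = r + 1")
        case True
        have "TT t h r m u = TT t h r m (u - ?\<Omega>)"
          by (rule TT_shift_Omega_fixed[where k="1"]) (simp_all add: t sigma_def)
        then show ?thesis using t a1 3 True by (auto simp: folding_defs mult.commute numeral_2_eq_2)
      next
        case False
        then show ?thesis using t a1 3 by (auto simp: folding_defs mult.commute Suc_diff_le)
      qed
    qed
  qed
  finally show ?thesis .
qed

lemma adj_prod_fold_T_A2even: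
  assumes type: "t = A2even r" and a: "a \<in> nodes t"
  shows "(\<Prod>b\<in>{b. adj t a b}. fold_T t h b m u)
       = Mt t h (fold_node t a) m (u - of_nat (fold_shift t a) * Omega t h)"
proof -
  have t: "t = A2even r" "r \<ge> 1" using type valid by (simp_all add: valid_type_def)
  let ?\<Omega> = "Omega t h"
  have a1: "1 \<le> a" "a \<le> 2*r" using a t by (auto simp: nodes_def)
  have "(\<Prod>b\<in>{b. adj t a b}. fold_T t h b m u) = fold_T t h (a - 1) m u * fold_T t h (a + 1) m u"
  proof (rule prod_eq_pair_if_subset[where f = "\<lambda>b. fold_T t h b m u"])
    show "{b. adj t a b} \<subseteq> {a - 1, a + 1}" using t by (auto simp: adj_def)
    fix b assume "b \<in> {a - 1, a + 1}" "b \<notin> {b. adj t a b}"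
    then have "b = 0 \<or> b = 2 * r + 1" using t a1 by (auto simp: adj_def nodes_def)
    then show "fold_T t h b m u = 1" using t by (auto simp: fold_T_def fold_node_def)
  qed (use a1 in auto)
  also have "\<dots> = Mt t h (fold_node t a) m (u - of_nat (fold_shift t a) * ?\<Omega>)"
  proof -
    consider "a < r" | "a = r" | "a > r" by linarith
    then show ?thesis
    proof cases
      case 1
      then have "a \<le> r - 1" "a - 1 \<le> r" by auto
      then show ?thesis using t a1 1 by (simp add: folding_defs)
    next
      case 2
      have "TT t h r m (u - ?\<Omega>) = TT t h r m (u + ?\<Omega>)"
        by (rule TT_shift_kappa_Omega[where k="-1"]) (simp add: t kappa_def)
      then show ?thesis using t a1 2 by (auto simp: folding_defs)
    next
      case 3
      show ?thesis
      proof (cases "a = r + 1")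
        case True
        show ?thesis using t a1 3 True by (auto simp: folding_defs mult.commute numeral_2_eq_2)
      next
        case False
        then show ?thesis using t a1 3 by (auto simp: folding_defs mult.commute Suc_diff_le)
      qed
    qed
  qed
  finally show ?thesis .
qed

lemma adj_prod_fold_T_D2:
  assumes type: "t = D2 r" and a: "a \<in> nodes t"
  shows "(\<Prod>b\<in>{b. adj t a b}. fold_T t h b m u)
       = Mt t h (fold_node t a) m (u - of_nat (fold_shift t a) * Omega t h)"
proof -
  have t: "t = D2 r" "r \<ge> 3" using type valid by (simp_all add: valid_type_def)
  let ?\<Omega> = "Omega t h"
  have a1: "1 \<le> a" "a \<le> r + 1" using a t by (auto simp: nodes_def)
  consider "a \<le> r - 2" | "a = r - 1" | "a = r" | "a = r + 1" using a1 by linarith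
  then show ?thesis
  proof cases
    case 1
    have "(\<Prod>b\<in>{b. adj t a b}. fold_T t h b m u) = fold_T t h (a - 1) m u * fold_T t h (a + 1) m u"
    proof (rule prod_eq_pair_if_subset[where f = "\<lambda>b. fold_T t h b m u"])
      show "{b. adj t a b} \<subseteq> {a - 1, a + 1}" using t 1 by (auto simp: adj_def doubleton_eq_iff)
      fix b assume "b \<in> {a - 1, a + 1}" "b \<notin> {b. adj t a b}"
      then have "b = 0" using t a1 1 by (auto simp: adj_def nodes_def)
      then show "fold_T t h b m u = 1" using t by (auto simp: fold_T_def fold_node_def)
    qed (use a1 in auto)
    then show ?thesis using t 1 a1 by (auto simp: folding_defs)
  next
    case 2
    have s: "{b. adj t a b} = {r - 2, r, r + 1}"
      using t 2 by (auto simp: adj_def nodes_def doubleton_eq_iff)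
    have "TT t h r m (u - ?\<Omega>) = TT t h r m (u + ?\<Omega>)"
      by (rule TT_shift_kappa_Omega[where k="-1"]) (simp add: t kappa_def)
    moreover have "r - 2 \<noteq> r" "r - 2 \<noteq> Suc r" using t by auto
    ultimately show ?thesis unfolding s using t 2 by (auto simp: folding_defs mult_ac)
  next
    case 3
    have s: "{b. adj t a b} = {r - 1}" using t 3 by (auto simp: adj_def nodes_def doubleton_eq_iff)
    then show ?thesis unfolding s using t 3 by (auto simp: folding_defs)
  next
    case 4
    have s: "{b. adj t a b} = {r - 1}" using t 4 by (auto simp: adj_def nodes_def doubleton_eq_iff)
    have ne: "r - 1 \<noteq> r" "r - 1 \<noteq> Suc r" using t by arith+
    have "TT t h (r - 1) m u = TT t h (r - 1) m (u - ?\<Omega>)"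
      by (rule TT_shift_Omega_fixed[where k="1"]) (use t ne in \<open>simp_all add: sigma_def\<close>)
    moreover note ne
    ultimately show ?thesis unfolding s using t 4 by (auto simp: folding_defs)
  qed
qed

lemma adj_prod_fold_T_E62:
  assumes t: "t = E62" and a: "a \<in> nodes t"
  shows "(\<Prod>b\<in>{b. adj t a b}. fold_T t h b m u)
       = Mt t h (fold_node t a) m (u - of_nat (fold_shift t a) * Omega t h)"
proof -
  let ?\<Omega> = "Omega t h"
  have "a = 1 \<or> a = 2 \<or> a = 3 \<or> a = 4 \<or> a = 5 \<or> a = 6" using a t by (auto simp: nodes_def)
  moreover have "{b. adj t 1 b} = {2}" "{b. adj t 2 b} = {1,3}" "{b. adj t 3 b} = {2,4,5}"
    "{b. adj t 4 b} = {3}" "{b. adj t 5 b} = {3,6}" "{b. adj t 6 b} = {5}"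
    using t by (auto simp: adj_def nodes_def doubleton_eq_iff)
  moreover have "TT t h 2 m (u - ?\<Omega>) = TT t h 2 m (u + ?\<Omega>)"
    by (rule TT_shift_kappa_Omega[where k="-1"]) (simp add: t kappa_def)
  moreover have "TT t h 3 m u = TT t h 3 m (u - ?\<Omega>)"
    by (rule TT_shift_Omega_fixed[where k="1"]) (use t in \<open>simp_all add: sigma_def\<close>)
  ultimately show ?thesis using t by (auto simp: folding_defs mult_ac)
qed

lemma adj_prod_fold_T_D43:
  assumes t: "t = D43" and a: "a \<in> nodes t"
  shows "(\<Prod>b\<in>{b. adj t a b}. fold_T t h b m u)
       = Mt t h (fold_node t a) m (u - of_nat (fold_shift t a) * Omega t h)"
proof -
  let ?\<Omega> = "Omega t h"
  have "a = 1 \<or> a = 2 \<or> a = 3 \<or> a = 4" using a t by (auto simp: nodes_def)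
  moreover have "{b. adj t 1 b} = {2}" "{b. adj t 2 b} = {1,3,4}" "{b. adj t 3 b} = {2}"
    "{b. adj t 4 b} = {2}"
    using t by (auto simp: adj_def nodes_def doubleton_eq_iff)
  moreover have "TT t h 1 m (u - 2 * ?\<Omega>) = TT t h 1 m (u + ?\<Omega>)"
    by (rule TT_shift_kappa_Omega[where k="-1"]) (simp add: t kappa_def)
  moreover have "TT t h 2 m u = TT t h 2 m (u - ?\<Omega>)"
    by (rule TT_shift_Omega_fixed[where k="1"]) (use t in \<open>simp_all add: sigma_def\<close>)
  moreover have "TT t h 2 m u = TT t h 2 m (u - 2 * ?\<Omega>)"
    by (rule TT_shift_Omega_fixed[where k="2"]) (use t in \<open>simp_all add: sigma_def\<close>)
  ultimately show ?thesis using t by (auto simp: folding_defs mult_ac)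
qed

lemma adj_prod_fold_T:
  assumes "a \<in> nodes t"
  shows "(\<Prod>b\<in>{b. adj t a b}. fold_T t h b m u)
       = Mt t h (fold_node t a) m (u - of_nat (fold_shift t a) * Omega t h)"
  using assms adj_prod_fold_T_A2odd adj_prod_fold_T_A2even adj_prod_fold_T_D2
    adj_prod_fold_T_E62 adj_prod_fold_T_D43
  by (cases t) auto

end

text \<open>A class in \<open>\<complex>\<^sub>c\<close> is represented by an arbitrary element; \<open>cyl_coarsen\<close> makes the choice
  irrelevant.\<close>
definition fold_gen :: "ttype \<Rightarrow> complex \<Rightarrow> gen \<Rightarrow> gen" where
  "fold_gen t h = (\<lambda>(a, m, C). (fold_node t a, m,
     cyl (of_nat (kappa_a t (fold_node t a)) * h)
       ((SOME u. u \<in> C) - of_nat (fold_shift t a) * Omega t h)))"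

definition unfold_gen :: "complex \<Rightarrow> gen \<Rightarrow> gen" where
  "unfold_gen h = (\<lambda>(b, m, C). (b, m, cyl h (SOME u. u \<in> C)))"

definition relX :: "ttype \<Rightarrow> complex \<Rightarrow> nat \<Rightarrow> nat \<Rightarrow> complex \<Rightarrow> gen lpoly" where
  "relX t h a m u = TX h a m (u - 1) * TX h a m (u + 1)
     - TX h a (m - 1) u * TX h a (m + 1) u - (\<Prod>b\<in>{b. adj t a b}. TX h b m u)"

definition relT :: "ttype \<Rightarrow> complex \<Rightarrow> nat \<Rightarrow> nat \<Rightarrow> complex \<Rightarrow> gen lpoly" where
  "relT t h a m u = TT t h a m (u - 1) * TT t h a m (u + 1)
     - TT t h a (m - 1) u * TT t h a (m + 1) u - Mt t h a m u"

lemma relsX_eq: "relsX t h = {relX t h a m u | a m u. a \<in> nodes t \<and> m \<ge> 1}"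
  by (simp add: relsX_def relX_def)

lemma relsT_eq: "relsT t h = {relT t h a m u | a m u. a \<in> Isig t \<and> m \<ge> 1}"
  by (simp add: relsT_def relT_def)

context twisted_T_system
begin

abbreviation fold_vars :: "gen lpoly \<Rightarrow> gen lpoly" where
  "fold_vars \<equiv> rename_vars (fold_gen t h)"

abbreviation unfold_vars :: "gen lpoly \<Rightarrow> gen lpoly" where
  "unfold_vars \<equiv> rename_vars (unfold_gen h)"

lemma TX_lpolys: "a \<in> nodes t \<Longrightarrow> TX h a m u \<in> lpolys (gensX t h)"
  by (auto simp: TX_def gensX_def lpolys_one intro!: lpolys_var)

lemma TT_lpolys: "a \<in> Isig t \<or> a = 0 \<Longrightarrow> TT t h a m u \<in> lpolys (gensT t h)"
  by (auto simp: TT_def gensT_def lpolys_one intro!: lpolys_var)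

lemma fold_T_lpolys: "a \<in> nodes t \<Longrightarrow> fold_T t h a m u \<in> lpolys (gensT t h)"
  unfolding fold_T_def by (intro TT_lpolys) (simp add: fold_node_in_Isig[OF valid])

lemma Mt_eq_adj_prod:
  "a \<in> Isig t \<Longrightarrow> Mt t h a m u = (\<Prod>b\<in>{b. adj t a b}. fold_T t h b m u)"
  using adj_prod_fold_T[of a m u] Isig_subset_nodes[OF valid]
  by (auto simp: fold_node_Isig fold_shift_Isig)

lemma relsX_lpolys: "relsX t h \<subseteq> lpolys (gensX t h)"
  unfolding relsX_eq relX_def
  by (auto intro!: lpolys_diff lpolys_mult lpolys_prod TX_lpolys dest: adj_nodes)

lemma relsT_lpolys: "relsT t h \<subseteq> lpolys (gensT t h)"
  unfolding relsT_eq relT_def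
  by (auto simp: Mt_eq_adj_prod intro!: lpolys_diff lpolys_mult lpolys_prod TT_lpolys fold_T_lpolys
      dest: adj_nodes)

lemma fold_gen_gens: "fold_gen t h ` gensX t h \<subseteq> gensT t h"
  using fold_node_in_Isig[OF valid] by (auto simp: gensX_def gensT_def fold_gen_def)

lemma unfold_gen_gens: "unfold_gen h ` gensT t h \<subseteq> gensX t h"
  using Isig_subset_nodes[OF valid] by (auto simp: gensX_def gensT_def unfold_gen_def)

lemma fold_vars_TX: "a \<in> nodes t \<Longrightarrow> fold_vars (TX h a m u) = fold_T t h a m u"
  using cyl_coarsen[OF h_nonzero kappa_a_pos some_in_cyl] fold_node_in_Isig[OF valid]
    zero_notin_Isig
  by (fastforce simp: TX_def TT_def fold_T_def fold_gen_def)

lemma fold_vars_relX: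
  assumes a: "a \<in> nodes t"
  shows "fold_vars (relX t h a m u)
       = relT t h (fold_node t a) m (u - of_nat (fold_shift t a) * Omega t h)"
proof -
  let ?d = "of_nat (fold_shift t a) * Omega t h"
  have "fold_vars (\<Prod>b\<in>{b. adj t a b}. TX h b m u) = (\<Prod>b\<in>{b. adj t a b}. fold_T t h b m u)"
    unfolding rename_vars_prod by (rule prod.cong) (auto simp: fold_vars_TX dest: adj_nodes)
  also have "\<dots> = Mt t h (fold_node t a) m (u - ?d)"
    using a by (rule adj_prod_fold_T)
  finally have prod:
    "fold_vars (\<Prod>b\<in>{b. adj t a b}. TX h b m u) = Mt t h (fold_node t a) m (u - ?d)" .
  have TX: "fold_vars (TX h a k v) = TT t h (fold_node t a) k (v - ?d)" for k v
    using a by (simp add: fold_vars_TX fold_T_def)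
  have shift: "u - 1 - ?d = u - ?d - 1" "u + 1 - ?d = u - ?d + 1"
    by (simp_all add: algebra_simps)
  show ?thesis
    by (simp add: relX_def relT_def rename_vars_diff rename_vars_mult TX prod shift)
qed

lemma fold_vars_relsX: "r \<in> relsX t h \<Longrightarrow> fold_vars r \<in> relsT t h"
  unfolding relsX_eq relsT_eq using fold_vars_relX fold_node_in_Isig[OF valid] by blast

lemma relsT_subset_fold_vars: "relsT t h \<subseteq> fold_vars ` relsX t h"
proof
  fix r assume "r \<in> relsT t h"
  then obtain a m u where r: "r = relT t h a m u" and a: "a \<in> Isig t" "m \<ge> 1"
    unfolding relsT_eq by blast
  have "a \<in> nodes t" using a Isig_subset_nodes[OF valid] by blast
  then have "fold_vars (relX t h a m u) = r"
    using fold_vars_relX[of a m u] a by (simp add: r fold_node_Isig fold_shift_Isig)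
  moreover have "relX t h a m u \<in> relsX t h"
    unfolding relsX_eq using \<open>a \<in> nodes t\<close> a by blast
  ultimately show "r \<in> fold_vars ` relsX t h" by blast
qed

lemma fold_unfold_vars:
  assumes q: "q \<in> lpolys (gensT t h)"
  shows "fold_vars (unfold_vars q) = q"
proof -
  have "fold_gen t h (unfold_gen h x) = x" if gen: "x \<in> gensT t h" for x
  proof -
    obtain b m u where x: "x = (b, m, cyl (of_nat (kappa_a t b) * h) u)" "b \<in> Isig t"
      using gen unfolding gensT_def by blast
    let ?c = "of_nat (kappa_a t b) * h"
    have "?c \<noteq> 0" using h_nonzero kappa_a_pos[of t b] by simp
    then have "cyl ?c (SOME v. v \<in> cyl h (SOME v. v \<in> cyl ?c u)) = cyl ?c u"
      using cyl_coarsen[OF h_nonzero kappa_a_pos some_in_cyl, of t b _ 0]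
        cyl_eq_if_mem[OF _ some_in_cyl] by simp
    then show ?thesis
      using x by (simp add: fold_gen_def unfold_gen_def fold_node_Isig fold_shift_Isig)
  qed
  then have "fold_vars (unfold_vars q) = rename_vars id q"
    unfolding rename_vars_comp using q by (intro rename_vars_cong) auto
  then show ?thesis by (simp add: rename_vars_id)
qed

lemma unfold_vars_TT:
  "b \<in> Isig t \<Longrightarrow> m \<ge> 1 \<Longrightarrow>
     unfold_vars (TT t h b m x) = TX h b m (SOME v. v \<in> cyl (of_nat (kappa_a t b) * h) x)"
  using zero_notin_Isig by (fastforce simp: TT_def TX_def unfold_gen_def)

end

section \<open>The quotient \<open>T(X\<^sub>N)/J\<^sup>\<sigma>\<close>\<close>

context twisted_T_system
begin

lemma ringX_cring: "cring (ringX t h)"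
  unfolding ringX_def by (rule presented_cring[OF relsX_lpolys])

lemma ringT_cring: "cring (ringT t h)"
  unfolding ringT_def by (rule presented_cring[OF relsT_lpolys])

lemma clsX_hom: "clsX t h \<in> ring_hom (laurent (gensX t h)) (ringX t h)"
  unfolding clsX_def ringX_def by (rule cls_hom[OF relsX_lpolys])

lemma clsT_hom: "clsT t h \<in> ring_hom (laurent (gensT t h)) (ringT t h)"
  unfolding clsT_def ringT_def by (rule cls_hom[OF relsT_lpolys])

lemma clsX_TX_carrier: "a \<in> nodes t \<Longrightarrow> clsX t h (TX h a m u) \<in> carrier (ringX t h)"
  using ring_hom_closed[OF clsX_hom] TX_lpolys by simp

lemma Jsig_gens_carrier:
  "{clsX t h (TX h a m u) \<ominus>\<^bsub>ringX t h\<^esub> clsX t h (TX h (sigma t a) m (u + Omega t h))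
     | a m u. a \<in> nodes t \<and> m \<ge> 1} \<subseteq> carrier (ringX t h)"
proof -
  interpret X: cring "ringX t h" by (rule ringX_cring)
  show ?thesis by (auto intro!: X.minus_closed clsX_TX_carrier sigma_in_nodes[OF valid])
qed

lemma Jsig_ideal: "ideal (Jsig t h) (ringX t h)"
proof -
  interpret X: cring "ringX t h" by (rule ringX_cring)
  show ?thesis unfolding Jsig_def by (rule X.genideal_ideal[OF Jsig_gens_carrier])
qed

lemma quotX_cring: "cring (quotX t h)"
  unfolding quotX_def by (rule ideal.quotient_is_cring[OF Jsig_ideal ringX_cring])

lemma clsQ_hom: "clsQ t h \<in> ring_hom (laurent (gensX t h)) (quotX t h)"
proof -
  have "clsQ t h = (+>\<^bsub>ringX t h\<^esub>) (Jsig t h) \<circ> clsX t h"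
    by (auto simp: clsQ_def)
  then show ?thesis
    unfolding quotX_def using ring_hom_trans[OF clsX_hom ideal.rcos_ring_hom[OF Jsig_ideal]] by simp
qed

lemma clsQ_relX: "r \<in> relsX t h \<Longrightarrow> clsQ t h r = \<zero>\<^bsub>quotX t h\<^esub>"
proof -
  assume r: "r \<in> relsX t h"
  interpret X: cring "ringX t h" by (rule ringX_cring)
  interpret J: ideal "Jsig t h" "ringX t h" by (rule Jsig_ideal)
  have "clsX t h r = \<zero>\<^bsub>ringX t h\<^esub>"
    unfolding clsX_def ringX_def by (rule cls_rel[OF relsX_lpolys r])
  then show ?thesis
    using X.a_rcos_zero[OF Jsig_ideal J.zero_closed]
    by (simp add: clsQ_def quotX_def FactRing_def)
qed

lemma clsQ_TX_sigma:
  assumes a: "a \<in> nodes t" and m: "m \<ge> 1"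
  shows "clsQ t h (TX h a m u) = clsQ t h (TX h (sigma t a) m (u + Omega t h))"
proof -
  interpret X: cring "ringX t h" by (rule ringX_cring)
  let ?d = "clsX t h (TX h a m u) \<ominus>\<^bsub>ringX t h\<^esub> clsX t h (TX h (sigma t a) m (u + Omega t h))"
  have "?d \<in> Jsig t h"
    unfolding Jsig_def using X.genideal_self[OF Jsig_gens_carrier] a m by blast
  then show ?thesis
    unfolding clsQ_def
    using X.quotient_eq_iff_same_a_r_cos[OF Jsig_ideal] clsX_TX_carrier a sigma_in_nodes[OF valid a]
    by blast
qed

lemma clsQ_TX_sigma_pow:
  assumes a: "a \<in> nodes t" and m: "m \<ge> 1"
  shows "clsQ t h (TX h ((sigma t ^^ n) a) m u) = clsQ t h (TX h a m (u - of_nat n * Omega t h))"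
proof (induction n arbitrary: u)
  case 0
  then show ?case by simp
next
  case (Suc n)
  have "(sigma t ^^ n) a \<in> nodes t"
    using a by (induction n) (auto intro: sigma_in_nodes[OF valid])
  then have "clsQ t h (TX h ((sigma t ^^ Suc n) a) m u)
      = clsQ t h (TX h ((sigma t ^^ n) a) m (u - Omega t h))"
    using clsQ_TX_sigma[OF _ m, of "(sigma t ^^ n) a" "u - Omega t h"] by simp
  also have "\<dots> = clsQ t h (TX h a m (u - of_nat (Suc n) * Omega t h))"
    using Suc.IH by (simp add: algebra_simps)
  finally show ?case .
qed

lemma clsQ_TX_fold:
  assumes a: "a \<in> nodes t" and m: "m \<ge> 1"
  shows "clsQ t h (TX h a m u)
       = clsQ t h (TX h (fold_node t a) m (u - of_nat (fold_shift t a) * Omega t h))"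
proof -
  have "fold_node t a \<in> nodes t"
    using fold_node_in_Isig[OF valid a] Isig_subset_nodes[OF valid] by blast
  from clsQ_TX_sigma_pow[OF this m, of "fold_shift t a" u] show ?thesis
    by (simp add: sigma_pow_fold_node[OF valid a])
qed

text \<open>If \<open>\<kappa>\<^sub>b = \<kappa>\<close> then \<open>b\<close> is fixed by \<open>\<sigma>\<close>, so \<open>clsQ_TX_sigma_pow\<close> gives the period \<open>\<Omega>\<close>.\<close>
lemma clsQ_TX_periodic:
  assumes b: "b \<in> Isig t" and m: "m \<ge> 1"
    and xy: "cyl (of_nat (kappa_a t b) * h) x = cyl (of_nat (kappa_a t b) * h) y"
  shows "clsQ t h (TX h b m x) = clsQ t h (TX h b m y)"
proof (cases "kappa_a t b = 1")
  case True
  then show ?thesis using xy by (simp add: TX_def)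
next
  case False
  then have fixed: "sigma t b = b" and kappa: "kappa_a t b = kappa t"
    using kappa_a_cases[of t b] by auto
  have bn: "b \<in> nodes t" using b Isig_subset_nodes[OF valid] by blast
  have shift: "clsQ t h (TX h b m v) = clsQ t h (TX h b m (v - of_nat n * Omega t h))" for v n
    using clsQ_TX_sigma_pow[OF bn m, of n v] fixed by (simp add: funpow_fixpoint)
  have "y \<in> cyl (of_nat (kappa t) * h) x" using xy cyl_self[of y] kappa by simp
  then obtain k :: int where "y - x = of_int k * (2 * of_real pi * \<i> / (of_nat (kappa t) * h))"
    unfolding mem_cyl_iff by blast
  then have y: "y = x + of_int k * Omega t h"
    by (simp add: Omega_def algebra_simps)
  show ?thesis
  proof (cases "k \<ge> 0")
    case True
    then show ?thesis using shift[of y "nat k"] by (simp add: y)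
  next
    case False
    then show ?thesis using shift[of x "nat (- k)"] by (simp add: y)
  qed
qed

lemma clsQ_unfold_TT:
  assumes b: "b \<in> Isig t"
  shows "clsQ t h (unfold_vars (TT t h b m x)) = clsQ t h (TX h b m x)"
proof (cases "m \<ge> 1")
  case True
  have "of_nat (kappa_a t b) * h \<noteq> 0" using h_nonzero kappa_a_pos[of t b] by simp
  then show ?thesis
    unfolding unfold_vars_TT[OF b True]
    by (intro clsQ_TX_periodic[OF b True] cyl_eq_if_mem some_in_cyl)
next
  case False
  then show ?thesis by (simp add: TT_def TX_def)
qed

lemma clsQ_unfold_fold:
  assumes p: "p \<in> lpolys (gensX t h)"
  shows "clsQ t h (unfold_vars (fold_vars p)) = clsQ t h p"
proof (rule laurent_hom_eqI[OF quotX_cring _ clsQ_hom _ p])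
  show "(\<lambda>p. clsQ t h (unfold_vars (fold_vars p))) \<in> ring_hom (laurent (gensX t h)) (quotX t h)"
    using ring_hom_trans[OF rename_vars_hom[OF fold_gen_gens]
        ring_hom_trans[OF rename_vars_hom[OF unfold_gen_gens] clsQ_hom]]
    by (simp add: comp_def)
  fix x assume "x \<in> gensX t h"
  then obtain a m u where x: "x = (a, m, cyl h u)" "a \<in> nodes t" "m \<ge> 1"
    unfolding gensX_def by blast
  then have "var x = TX h a m u" by (simp add: TX_def)
  then show "clsQ t h (unfold_vars (fold_vars (var x))) = clsQ t h (var x)"
    using clsQ_unfold_TT[OF fold_node_in_Isig[OF valid x(2)]] clsQ_TX_fold[OF x(2,3)]
    by (simp add: fold_vars_TX[OF x(2)] fold_T_def)
qed

end

context twisted_T_system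
begin

definition fold_hom :: "gen lpoly set \<Rightarrow> gen lpoly set" where
  "fold_hom = quot_lift (\<lambda>p. clsT t h (fold_vars p))"

definition unfold_hom :: "gen lpoly set \<Rightarrow> gen lpoly set set" where
  "unfold_hom = quot_lift (\<lambda>q. clsQ t h (unfold_vars q))"

lemma clsT_fold_vars_hom:
  "(\<lambda>p. clsT t h (fold_vars p)) \<in> ring_hom (laurent (gensX t h)) (ringT t h)"
  using ring_hom_trans[OF rename_vars_hom[OF fold_gen_gens] clsT_hom] by (simp add: comp_def)

lemma clsT_fold_vars_relX: "r \<in> relsX t h \<Longrightarrow> clsT t h (fold_vars r) = \<zero>\<^bsub>ringT t h\<^esub>"
  unfolding clsT_def ringT_def by (rule cls_rel[OF relsT_lpolys fold_vars_relsX])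

lemma fold_hom_ring_hom: "fold_hom \<in> ring_hom (ringX t h) (ringT t h)"
  using presented_lift(1)[OF relsX_lpolys ringT_cring clsT_fold_vars_hom clsT_fold_vars_relX]
  by (simp add: fold_hom_def ringX_def)

lemma fold_hom_clsX: "p \<in> lpolys (gensX t h) \<Longrightarrow> fold_hom (clsX t h p) = clsT t h (fold_vars p)"
  using presented_lift(2)[OF relsX_lpolys ringT_cring clsT_fold_vars_hom clsT_fold_vars_relX]
  by (simp add: fold_hom_def clsX_def)

lemma clsQ_unfold_vars_hom:
  "(\<lambda>q. clsQ t h (unfold_vars q)) \<in> ring_hom (laurent (gensT t h)) (quotX t h)"
  using ring_hom_trans[OF rename_vars_hom[OF unfold_gen_gens] clsQ_hom] by (simp add: comp_def)

text \<open>Each relation of \<open>T(X\<^sup>(\<^sup>\<kappa>\<^sup>)\<^sub>N)\<close> is the folding of a relation of \<open>T(X\<^sub>N)\<close>, and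
  unfolding undoes folding modulo \<open>J\<^sup>\<sigma>\<close>.\<close>
lemma clsQ_unfold_vars_relT:
  assumes "r \<in> relsT t h"
  shows "clsQ t h (unfold_vars r) = \<zero>\<^bsub>quotX t h\<^esub>"
proof -
  obtain r' where "r' \<in> relsX t h" "r = fold_vars r'"
    using relsT_subset_fold_vars assms by blast
  then show ?thesis using clsQ_unfold_fold relsX_lpolys clsQ_relX by auto
qed

lemma unfold_hom_ring_hom: "unfold_hom \<in> ring_hom (ringT t h) (quotX t h)"
  using presented_lift(1)[OF relsT_lpolys quotX_cring clsQ_unfold_vars_hom clsQ_unfold_vars_relT]
  by (simp add: unfold_hom_def ringT_def)

lemma unfold_hom_clsT:
  "q \<in> lpolys (gensT t h) \<Longrightarrow> unfold_hom (clsT t h q) = clsQ t h (unfold_vars q)"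
  using presented_lift(2)[OF relsT_lpolys quotX_cring clsQ_unfold_vars_hom clsQ_unfold_vars_relT]
  by (simp add: unfold_hom_def clsT_def)

lemma ringX_carrier_clsX:
  assumes "Y \<in> carrier (ringX t h)"
  obtains p where "p \<in> lpolys (gensX t h)" "Y = clsX t h p"
  using assms unfolding ringX_def clsX_def by (rule presented_carrier_cls)

lemma fold_hom_surj: "fold_hom ` carrier (ringX t h) = carrier (ringT t h)"
proof
  show "fold_hom ` carrier (ringX t h) \<subseteq> carrier (ringT t h)"
    using ring_hom_closed[OF fold_hom_ring_hom] by blast
  show "carrier (ringT t h) \<subseteq> fold_hom ` carrier (ringX t h)"
  proof
    fix Y assume "Y \<in> carrier (ringT t h)"
    then obtain q where q: "q \<in> lpolys (gensT t h)" "Y = clsT t h q"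
      unfolding ringT_def clsT_def by (rule presented_carrier_cls)
    have uq: "unfold_vars q \<in> lpolys (gensX t h)"
      using q(1) unfold_gen_gens by (rule rename_vars_lpolys)
    then have "Y = fold_hom (clsX t h (unfold_vars q))"
      using q by (simp add: fold_hom_clsX fold_unfold_vars)
    moreover have "clsX t h (unfold_vars q) \<in> carrier (ringX t h)"
      using uq ring_hom_closed[OF clsX_hom] by simp
    ultimately show "Y \<in> fold_hom ` carrier (ringX t h)" by blast
  qed
qed

lemma Jsig_subset_kernel: "Jsig t h \<subseteq> a_kernel (ringX t h) (ringT t h) fold_hom"
proof -
  interpret X: cring "ringX t h" by (rule ringX_cring)
  have "ring_hom_ring (ringX t h) (ringT t h) fold_hom"
    using X.ring_axioms cring.axioms(1)[OF ringT_cring] fold_hom_ring_hom by (rule ring_hom_ringI2)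
  then have ker: "ideal (a_kernel (ringX t h) (ringT t h) fold_hom) (ringX t h)"
    by (rule ring_hom_ring.kernel_is_ideal)
  show ?thesis
    unfolding Jsig_def
  proof (rule X.genideal_minimal[OF ker], safe)
    fix a m :: nat and u :: complex
    assume a: "a \<in> nodes t" and m: "m \<ge> 1"
    have sa: "sigma t a \<in> nodes t" using sigma_in_nodes[OF valid a] .
    let ?p = "TX h a m u" and ?q = "TX h (sigma t a) m (u + Omega t h)"
    have pq: "?p \<in> lpolys (gensX t h)" "?q \<in> lpolys (gensX t h)"
      using TX_lpolys a sa by auto
    have diff: "clsX t h ?p \<ominus>\<^bsub>ringX t h\<^esub> clsX t h ?q = clsX t h (?p - ?q)"
      using ring_hom_laurent_diff[OF clsX_hom ringX_cring pq] by simp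
    have "fold_vars (?p - ?q) = 0"
      by (simp add: rename_vars_diff fold_vars_TX a sa fold_T_sigma)
    then have "fold_hom (clsX t h (?p - ?q)) = \<zero>\<^bsub>ringT t h\<^esub>"
      using fold_hom_clsX pq
        ring_hom_zero[OF clsT_hom laurent.ring_axioms cring.axioms(1)[OF ringT_cring]]
      by (simp add: lpolys_diff)
    then show "clsX t h ?p \<ominus>\<^bsub>ringX t h\<^esub> clsX t h ?q \<in> a_kernel (ringX t h) (ringT t h) fold_hom"
      unfolding diff a_kernel_def' using ring_hom_closed[OF clsX_hom] pq by (simp add: lpolys_diff)
  qed
qed

lemma kernel_fold_hom: "a_kernel (ringX t h) (ringT t h) fold_hom = Jsig t h"
proof (rule a_kernel_eqI[OF _ Jsig_ideal Jsig_subset_kernel unfold_hom_ring_hom[unfolded quotX_def]])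
  show "ring_hom_ring (ringX t h) (ringT t h) fold_hom"
    using cring.axioms(1)[OF ringX_cring] cring.axioms(1)[OF ringT_cring] fold_hom_ring_hom
    by (rule ring_hom_ringI2)
  fix Y assume "Y \<in> carrier (ringX t h)"
  then obtain p where p: "p \<in> lpolys (gensX t h)" "Y = clsX t h p" by (rule ringX_carrier_clsX)
  have "fold_vars p \<in> lpolys (gensT t h)"
    using p(1) fold_gen_gens by (rule rename_vars_lpolys)
  then have "unfold_hom (fold_hom Y) = clsQ t h p"
    using p by (simp add: fold_hom_clsX unfold_hom_clsT clsQ_unfold_fold)
  then show "unfold_hom (fold_hom Y) = Jsig t h +>\<^bsub>ringX t h\<^esub> Y"
    using p(2) by (simp add: clsQ_def)
qed

lemma quotX_iso:
  "\<exists>\<phi>. \<phi> \<in> ring_iso (quotX t h) (ringT t h) \<and>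
     (\<forall>a \<in> Isig t. \<forall>m::nat. \<forall>u::complex. m \<ge> 1 \<longrightarrow>
        \<phi> (clsQ t h (TX h a m u)) = clsT t h (TT t h a m u))"
proof (intro exI conjI ballI allI impI)
  interpret F: ring_hom_ring "ringX t h" "ringT t h" fold_hom
    using cring.axioms(1)[OF ringX_cring] cring.axioms(1)[OF ringT_cring] fold_hom_ring_hom
    by (rule ring_hom_ringI2)
  show "(\<lambda>X. the_elem (fold_hom ` X)) \<in> ring_iso (quotX t h) (ringT t h)"
    using F.FactRing_iso_set[OF fold_hom_surj] by (simp add: quotX_def kernel_fold_hom)
  fix a m u assume a: "a \<in> Isig t"
  have an: "a \<in> nodes t" using a Isig_subset_nodes[OF valid] by blast
  have "the_elem (fold_hom ` clsQ t h (TX h a m u)) = fold_hom (clsX t h (TX h a m u))"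
    unfolding clsQ_def kernel_fold_hom[symmetric] using clsX_TX_carrier[OF an] by simp
  also have "\<dots> = clsT t h (TT t h a m u)"
    using a by (simp add: fold_hom_clsX[OF TX_lpolys[OF an]] fold_vars_TX[OF an] fold_T_def
        fold_node_Isig fold_shift_Isig)
  finally show "the_elem (fold_hom ` clsQ t h (TX h a m u)) = clsT t h (TT t h a m u)" .
qed

end

theorem proposition9p5:
  fixes t :: ttype and h :: complex
  assumes "valid_type t"
    and "\<forall>q::rat. h \<noteq> 2 * of_real pi * \<i> * of_real (of_rat q)"
  shows "\<exists>\<phi>. \<phi> \<in> ring_iso (quotX t h) (ringT t h) \<and>
           (\<forall>a \<in> Isig t. \<forall>m::nat. \<forall>u::complex. m \<ge> 1 \<longrightarrow>
              \<phi> (clsQ t h (TX h a m u)) = clsT t h (TT t h a m u))"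
proof -
  have "h \<noteq> 0" using assms(2)[rule_format, of 0] by simp
  with assms(1) interpret twisted_T_system t h by unfold_locales
  show ?thesis by (rule quotX_iso)
qed

end
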